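(* Let $I$ be a set, $P_i$ ($i\in I$) pastures, and $\bigotimes_{i\in I}P_i$ with $i_j:P_j\to\bigotimes_{i\in I}P_i$ as described in the context. If $P$ is a pasture and $f_i:P_i\to P$ is a morphism of pastures for each $i\in I$, then there exists a unique morphism $g:\bigotimes_{i\in I}P_i\to P$ such that $f_j=g\circ i_j$ for each $j\in I$.
   Context: A pasture is a multiplicative monoid $P$ with a zero element $0$ (absorbing) such that $P^\times=P\setminus\{0\}$ is an abelian group, together with an involution $x\mapsto -x$ fixing $0$, and a subset $N_P\subseteq P^3$ (write $a+b+c=0$ for $(a,b,c)\in N_P$) such that: (1) $N_P$ is invariant under permutations; (2) if $a+b+c=0$ then $da+db+dc=0$ for all $d\in P$; (3) $a+b+0=0$ iff $a=-b$. A morphism of pastures is a multiplicative map $f$ with $f(0)=0$, $f(1)=1$, $f(-a)=-f(a)$, preserving nullsets. The coproduct: let $\bigoplus_{i\in I}P_i^\times$ be the set of families $(x_i)_{i\in I}$ with $x_i\in P_i^\times$ and $x_i=1_i$ for all but finitely many $i$. Define $(x_i)\sim(y_i)$ iff there is a finite set of indices of even cardinality on which $x_i=-y_i$, with $x_i=y_i$ at all other indices. Set $\bigotimes_{i\in I}P_i=\{0\}\cup(\bigoplus_{i\in I}P_i^\times/\sim)$, classes written $[(x_i)_{i\in I}]$. Multiplication: $0$ absorbing, $[(x_i)][(y_i)]=[(x_iy_i)]$. Involution: $-0=0$ and $-[(x_i)]=[(y_i)]$ where $y_j=-x_j$ for one chosen index $j$ and $y_i=x_i$ for $i\neq j$.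 Nullset: for nonzero elements, $[(x_i)]+[(y_i)]+[(z_i)]=0$ iff there are representatives $(x_i'),(y_i'),(z_i')$ of these classes and an index $j$ with $x'_j+y'_j+z'_j=0$ in $P_j$ and $x'_i=y'_i=z'_i$ for all $i\neq j$; relations involving $0$ are the permutations of $u+v+0=0$ iff $u=-v$. This is a pasture. The maps: $i_j(0)=0$ and $i_j(x)=[(y_i)_{i\in I}]$ with $y_j=x$ and $y_i=1_i$ for $i\neq j$. *)

theory Defs
  imports Main
begin

record 'a pasture =
  pcar  :: "'a set"
  pmul  :: "'a \<Rightarrow> 'a \<Rightarrow> 'a"
  pzero :: 'a
  pone  :: 'a
  pneg  :: "'a \<Rightarrow> 'a"
  pnull :: "('a \<times> 'a \<times> 'a) set"

definition is_pasture :: "('a, 'b) pasture_scheme \<Rightarrow> bool" where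
  "is_pasture P \<longleftrightarrow>
     pzero P \<in> pcar P \<and> pone P \<in> pcar P \<and> pzero P \<noteq> pone P \<and>
     (\<forall>x\<in>pcar P. \<forall>y\<in>pcar P. pmul P x y \<in> pcar P) \<and>
     (\<forall>x\<in>pcar P. \<forall>y\<in>pcar P. \<forall>z\<in>pcar P. pmul P (pmul P x y) z = pmul P x (pmul P y z)) \<and>
     (\<forall>x\<in>pcar P. \<forall>y\<in>pcar P. pmul P x y = pmul P y x) \<and>
     (\<forall>x\<in>pcar P. pmul P (pone P) x = x) \<and>
     (\<forall>x\<in>pcar P. pmul P (pzero P) x = pzero P) \<and>
     (\<forall>x\<in>pcar P. \<forall>y\<in>pcar P. x \<noteq> pzero P \<longrightarrow> y \<noteq> pzero P \<longrightarrow> pmul P x y \<noteq> pzero P) \<and>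
     (\<forall>x\<in>pcar P. x \<noteq> pzero P \<longrightarrow> (\<exists>y\<in>pcar P. pmul P x y = pone P)) \<and>
     (\<forall>x\<in>pcar P. pneg P x \<in> pcar P \<and> pneg P (pneg P x) = x) \<and>
     pneg P (pzero P) = pzero P \<and>
     pnull P \<subseteq> pcar P \<times> pcar P \<times> pcar P \<and>
     (\<forall>a b c. (a, b, c) \<in> pnull P \<longrightarrow>
        (a, c, b) \<in> pnull P \<and> (b, a, c) \<in> pnull P \<and> (b, c, a) \<in> pnull P \<and>
        (c, a, b) \<in> pnull P \<and> (c, b, a) \<in> pnull P) \<and>
     (\<forall>a b c d. (a, b, c) \<in> pnull P \<longrightarrow> d \<in> pcar P \<longrightarrow>
        (pmul P d a, pmul P d b, pmul P d c) \<in> pnull P) \<and>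
     (\<forall>a\<in>pcar P. \<forall>b\<in>pcar P. (a, b, pzero P) \<in> pnull P \<longleftrightarrow> a = pneg P b)"

definition pasture_morphism ::
  "('a, 'c) pasture_scheme \<Rightarrow> ('b, 'd) pasture_scheme \<Rightarrow> ('a \<Rightarrow> 'b) \<Rightarrow> bool" where
  "pasture_morphism P Q f \<longleftrightarrow>
     (\<forall>x\<in>pcar P. f x \<in> pcar Q) \<and>
     f (pzero P) = pzero Q \<and> f (pone P) = pone Q \<and>
     (\<forall>x\<in>pcar P. \<forall>y\<in>pcar P. f (pmul P x y) = pmul Q (f x) (f y)) \<and>
     (\<forall>x\<in>pcar P. f (pneg P x) = pneg Q (f x)) \<and>
     (\<forall>a b c. (a, b, c) \<in> pnull P \<longrightarrow> (f a, f b, f c) \<in> pnull Q)"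

text \<open>Families are functions on the index type, restricted to I
  (value undefined outside I); elements of the coproduct are sets of families:
  the empty set is 0, and nonzero elements are the equivalence classes.\<close>

definition cp_fams :: "'i set \<Rightarrow> ('i \<Rightarrow> 'a pasture) \<Rightarrow> ('i \<Rightarrow> 'a) set" where
  "cp_fams I P = {x. (\<forall>i\<in>I. x i \<in> pcar (P i) \<and> x i \<noteq> pzero (P i)) \<and>
                     (\<forall>i. i \<notin> I \<longrightarrow> x i = undefined) \<and>
                     finite {i\<in>I. x i \<noteq> pone (P i)}}"

definition cp_rel :: "'i set \<Rightarrow> ('i \<Rightarrow> 'a pasture) \<Rightarrow> ('i \<Rightarrow> 'a) \<Rightarrow> ('i \<Rightarrow> 'a) \<Rightarrow> bool" where
  "cp_rel I P x y \<longleftrightarrow> x \<in> cp_fams I P \<and> y \<in> cp_fams I P \<and>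
     (\<exists>S. S \<subseteq> I \<and> finite S \<and> even (card S) \<and>
          (\<forall>i\<in>S. x i = pneg (P i) (y i)) \<and> (\<forall>i\<in>I - S. x i = y i))"

definition cp_class :: "'i set \<Rightarrow> ('i \<Rightarrow> 'a pasture) \<Rightarrow> ('i \<Rightarrow> 'a) \<Rightarrow> ('i \<Rightarrow> 'a) set" where
  "cp_class I P x = {y. cp_rel I P x y}"

definition cp_car :: "'i set \<Rightarrow> ('i \<Rightarrow> 'a pasture) \<Rightarrow> ('i \<Rightarrow> 'a) set set" where
  "cp_car I P = insert {} (cp_class I P ` cp_fams I P)"

definition cp_mul :: "'i set \<Rightarrow> ('i \<Rightarrow> 'a pasture) \<Rightarrow>
    ('i \<Rightarrow> 'a) set \<Rightarrow> ('i \<Rightarrow> 'a) set \<Rightarrow> ('i \<Rightarrow> 'a) set" where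
  "cp_mul I P X Y = (if X = {} \<or> Y = {} then {} else
     (let x = (SOME x. x \<in> X); y = (SOME y. y \<in> Y) in
      cp_class I P (\<lambda>i. if i \<in> I then pmul (P i) (x i) (y i) else undefined)))"

definition cp_one :: "'i set \<Rightarrow> ('i \<Rightarrow> 'a pasture) \<Rightarrow> ('i \<Rightarrow> 'a) set" where
  "cp_one I P = cp_class I P (\<lambda>i. if i \<in> I then pone (P i) else undefined)"

definition cp_neg :: "'i set \<Rightarrow> ('i \<Rightarrow> 'a pasture) \<Rightarrow> ('i \<Rightarrow> 'a) set \<Rightarrow> ('i \<Rightarrow> 'a) set" where
  "cp_neg I P X = (if X = {} then {} else
     (let x = (SOME x. x \<in> X); j = (SOME j. j \<in> I) in
      cp_class I P (x(j := pneg (P j) (x j)))))"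

definition cp_null :: "'i set \<Rightarrow> ('i \<Rightarrow> 'a pasture) \<Rightarrow>
    (('i \<Rightarrow> 'a) set \<times> ('i \<Rightarrow> 'a) set \<times> ('i \<Rightarrow> 'a) set) set" where
  "cp_null I P = {(X, Y, Z). X \<in> cp_car I P \<and> Y \<in> cp_car I P \<and> Z \<in> cp_car I P \<and>
     ((X \<noteq> {} \<and> Y \<noteq> {} \<and> Z \<noteq> {} \<and>
        (\<exists>x\<in>X. \<exists>y\<in>Y. \<exists>z\<in>Z. \<exists>j\<in>I. (x j, y j, z j) \<in> pnull (P j) \<and>
           (\<forall>i\<in>I - {j}. x i = y i \<and> y i = z i))) \<or>
      (Z = {} \<and> X = cp_neg I P Y) \<or>
      (Y = {} \<and> X = cp_neg I P Z) \<or>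
      (X = {} \<and> Y = cp_neg I P Z))}"

definition coprod :: "'i set \<Rightarrow> ('i \<Rightarrow> 'a pasture) \<Rightarrow> ('i \<Rightarrow> 'a) set pasture" where
  "coprod I P = \<lparr> pcar = cp_car I P, pmul = cp_mul I P, pzero = {}, pone = cp_one I P,
                  pneg = cp_neg I P, pnull = cp_null I P \<rparr>"

definition cp_inj :: "'i set \<Rightarrow> ('i \<Rightarrow> 'a pasture) \<Rightarrow> 'i \<Rightarrow> 'a \<Rightarrow> ('i \<Rightarrow> 'a) set" where
  "cp_inj I P j x = (if x = pzero (P j) then {} else
     cp_class I P (\<lambda>i. if i = j then x else if i \<in> I then pone (P i) else undefined))"

end

(*
  A nonzero element of the coproduct is the class of a finitely supported family, i.e. a
  finite product of injected elements, so a morphism out of the coproduct is determined by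
  its values on the injections; this gives uniqueness. For existence, send the class of
  (x_i) to the product of the f_i(x_i) over the support. Representatives differ by sign
  changes at an even number of indices and (-1)^2 = 1, so this is well defined; it is
  multiplicative coordinatewise; and a null relation of the coproduct lives in a single
  coordinate j, so its image is the f_j-image of a null relation of P_j scaled by the
  common product over the other coordinates.
*)
theory Submission
  imports Defs "HOL-Algebra.FiniteProduct"
begin

lemma is_pastureD:
  assumes "is_pasture R"
  shows pasture_zero_closed: "pzero R \<in> pcar R"
    and pasture_one_closed: "pone R \<in> pcar R"
    and pasture_zero_neq_one: "pzero R \<noteq> pone R"
    and pasture_mult_closed: "\<lbrakk>x \<in> pcar R; y \<in> pcar R\<rbrakk> \<Longrightarrow> pmul R x y \<in> pcar R"
    and pasture_mult_assoc:
      "\<lbrakk>x \<in> pcar R; y \<in> pcar R; z \<in> pcar R\<rbrakk> \<Longrightarrow> pmul R (pmul R x y) z = pmul R x (pmul R y z)"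
    and pasture_mult_comm: "\<lbrakk>x \<in> pcar R; y \<in> pcar R\<rbrakk> \<Longrightarrow> pmul R x y = pmul R y x"
    and pasture_one_mult: "x \<in> pcar R \<Longrightarrow> pmul R (pone R) x = x"
    and pasture_zero_mult: "x \<in> pcar R \<Longrightarrow> pmul R (pzero R) x = pzero R"
    and pasture_mult_nonzero:
      "\<lbrakk>x \<in> pcar R; y \<in> pcar R; x \<noteq> pzero R; y \<noteq> pzero R\<rbrakk> \<Longrightarrow> pmul R x y \<noteq> pzero R"
    and pasture_neg_closed: "x \<in> pcar R \<Longrightarrow> pneg R x \<in> pcar R"
    and pasture_neg_neg: "x \<in> pcar R \<Longrightarrow> pneg R (pneg R x) = x"
    and pasture_neg_zero: "pneg R (pzero R) = pzero R"
    and pasture_null_perm: "(a, b, c) \<in> pnull R \<Longrightarrow>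
      (a, c, b) \<in> pnull R \<and> (b, a, c) \<in> pnull R \<and> (b, c, a) \<in> pnull R \<and>
      (c, a, b) \<in> pnull R \<and> (c, b, a) \<in> pnull R"
    and pasture_null_scale:
      "\<lbrakk>(a, b, c) \<in> pnull R; d \<in> pcar R\<rbrakk> \<Longrightarrow> (pmul R d a, pmul R d b, pmul R d c) \<in> pnull R"
    and pasture_null_zero_iff:
      "\<lbrakk>a \<in> pcar R; b \<in> pcar R\<rbrakk> \<Longrightarrow> (a, b, pzero R) \<in> pnull R \<longleftrightarrow> a = pneg R b"
  using assms unfolding is_pasture_def by (elim conjE, metis)+

lemma pasture_mult_one_right: "\<lbrakk>is_pasture R; x \<in> pcar R\<rbrakk> \<Longrightarrow> pmul R x (pone R) = x"
  by (metis pasture_mult_comm pasture_one_closed pasture_one_mult)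

lemma pasture_mult_zero_right: "\<lbrakk>is_pasture R; x \<in> pcar R\<rbrakk> \<Longrightarrow> pmul R x (pzero R) = pzero R"
  by (metis pasture_mult_comm pasture_zero_closed pasture_zero_mult)

text \<open>The nullset axioms for \<open>-1 + 1 + 0 = 0\<close>, scaled by \<open>x\<close>, force \<open>-x = (-1) x\<close>.\<close>
lemma pasture_neg_eq_mult:
  assumes R: "is_pasture R" and x: "x \<in> pcar R"
  shows "pneg R x = pmul R (pneg R (pone R)) x"
proof -
  let ?m = "pneg R (pone R)"
  have m: "?m \<in> pcar R"
    using R by (simp add: pasture_neg_closed pasture_one_closed)
  have "(?m, pone R, pzero R) \<in> pnull R"
    using R m by (simp add: pasture_null_zero_iff pasture_one_closed)
  then have "(pmul R x ?m, pmul R x (pone R), pmul R x (pzero R)) \<in> pnull R"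
    using x by (rule pasture_null_scale[OF R])
  then have "(pmul R x ?m, x, pzero R) \<in> pnull R"
    using R x by (simp add: pasture_mult_one_right pasture_mult_zero_right)
  then show ?thesis
    using R x m by (simp add: pasture_null_zero_iff pasture_mult_closed pasture_mult_comm)
qed

lemma pasture_neg_one_square:
  "is_pasture R \<Longrightarrow> pmul R (pneg R (pone R)) (pneg R (pone R)) = pone R"
  by (metis pasture_neg_closed pasture_neg_eq_mult pasture_neg_neg pasture_one_closed)

lemma pasture_neg_mult_left:
  assumes R: "is_pasture R" and a: "a \<in> pcar R" and b: "b \<in> pcar R"
  shows "pmul R (pneg R a) b = pneg R (pmul R a b)"
proof -
  let ?m = "pneg R (pone R)"
  have m: "?m \<in> pcar R"
    using R by (simp add: pasture_neg_closed pasture_one_closed)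
  have "pmul R (pneg R a) b = pmul R (pmul R ?m a) b"
    by (simp only: pasture_neg_eq_mult[OF R a])
  also have "\<dots> = pmul R ?m (pmul R a b)"
    by (rule pasture_mult_assoc[OF R m a b])
  also have "\<dots> = pneg R (pmul R a b)"
    by (rule pasture_neg_eq_mult[OF R pasture_mult_closed[OF R a b], symmetric])
  finally show ?thesis .
qed

lemma pasture_neg_mult_right:
  "\<lbrakk>is_pasture R; a \<in> pcar R; b \<in> pcar R\<rbrakk> \<Longrightarrow> pmul R a (pneg R b) = pneg R (pmul R a b)"
  by (metis pasture_mult_comm pasture_neg_closed pasture_neg_mult_left)

lemma pasture_neg_mult_neg:
  "\<lbrakk>is_pasture R; a \<in> pcar R; b \<in> pcar R\<rbrakk> \<Longrightarrow> pmul R (pneg R a) (pneg R b) = pmul R a b"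
  by (simp add: pasture_neg_mult_left pasture_neg_mult_right pasture_neg_closed
      pasture_mult_closed pasture_neg_neg)

lemma pasture_neg_nonzero: "\<lbrakk>is_pasture R; a \<in> pcar R; a \<noteq> pzero R\<rbrakk> \<Longrightarrow> pneg R a \<noteq> pzero R"
  by (metis pasture_neg_neg pasture_neg_zero)

lemma pasture_morphismD:
  assumes "pasture_morphism P Q f"
  shows pasture_morphism_closed: "x \<in> pcar P \<Longrightarrow> f x \<in> pcar Q"
    and pasture_morphism_zero: "f (pzero P) = pzero Q"
    and pasture_morphism_one: "f (pone P) = pone Q"
    and pasture_morphism_mult:
      "\<lbrakk>x \<in> pcar P; y \<in> pcar P\<rbrakk> \<Longrightarrow> f (pmul P x y) = pmul Q (f x) (f y)"
    and pasture_morphism_neg: "x \<in> pcar P \<Longrightarrow> f (pneg P x) = pneg Q (f x)"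
    and pasture_morphism_null: "(a, b, c) \<in> pnull P \<Longrightarrow> (f a, f b, f c) \<in> pnull Q"
  using assms unfolding pasture_morphism_def by blast+

definition mult_monoid :: "('a, 'b) pasture_scheme \<Rightarrow> 'a monoid" where
  "mult_monoid R = \<lparr>carrier = pcar R, mult = pmul R, one = pone R\<rparr>"

lemma mult_monoid_simps [simp]:
  "carrier (mult_monoid R) = pcar R" "mult (mult_monoid R) = pmul R" "one (mult_monoid R) = pone R"
  by (simp_all add: mult_monoid_def)

lemma comm_monoid_mult_monoid:
  assumes R: "is_pasture R"
  shows "comm_monoid (mult_monoid R)"
  by (rule comm_monoidI)
    (auto simp: pasture_one_closed[OF R] pasture_mult_closed[OF R] pasture_one_mult[OF R]
      intro: pasture_mult_assoc[OF R] pasture_mult_comm[OF R])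

lemma finprod_neg_one_even_card:
  assumes R: "is_pasture R" and "even (card S)"
  shows "finprod (mult_monoid R) (\<lambda>_. pneg R (pone R)) S = pone R"
proof -
  interpret comm_monoid "mult_monoid R"
    by (rule comm_monoid_mult_monoid[OF R])
  let ?m = "pneg R (pone R)"
  have m: "?m \<in> pcar R"
    using R by (simp add: pasture_neg_closed pasture_one_closed)
  obtain k where "card S = 2 * k"
    using assms(2) by blast
  moreover have "?m [^]\<^bsub>mult_monoid R\<^esub> (2::nat) = pone R"
    using m pasture_neg_one_square[OF R] by (simp add: numeral_2_eq_2 pasture_one_mult[OF R])
  ultimately show ?thesis
    using m nat_pow_one[simplified] by (simp add: finprod_const nat_pow_pow[symmetric])
qed

lemma coprod_simps [simp]:
  "pcar (coprod I P) = cp_car I P" "pmul (coprod I P) = cp_mul I P" "pzero (coprod I P) = {}"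
  "pone (coprod I P) = cp_one I P" "pneg (coprod I P) = cp_neg I P"
  "pnull (coprod I P) = cp_null I P"
  by (simp_all add: coprod_def)

lemma even_card_sym_diff:
  assumes "finite S" "finite T" "even (card S)" "even (card T)"
  shows "even (card ((S - T) \<union> (T - S)))"
proof -
  have "card ((S - T) \<union> (T - S)) = card (S - T) + card (T - S)"
    by (rule card_Un_disjoint) (use assms in auto)
  moreover have "card S = card (S \<inter> T) + card (S - T)" "card T = card (S \<inter> T) + card (T - S)"
    using card_Int_Diff[OF assms(1), of T] card_Int_Diff[OF assms(2), of S]
    by (simp_all add: Int_commute)
  ultimately show ?thesis
    using assms(3,4) by presburger
qed

locale coprod_factors =
  fixes I :: "'i set" and P :: "'i \<Rightarrow> 'a pasture"
  assumes factor_pasture: "i \<in> I \<Longrightarrow> is_pasture (P i)"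
begin

definition fam_supp :: "('i \<Rightarrow> 'a) \<Rightarrow> 'i set" where
  "fam_supp x = {i\<in>I. x i \<noteq> pone (P i)}"

definition fam_mult :: "('i \<Rightarrow> 'a) \<Rightarrow> ('i \<Rightarrow> 'a) \<Rightarrow> 'i \<Rightarrow> 'a" where
  "fam_mult x y = (\<lambda>i. if i \<in> I then pmul (P i) (x i) (y i) else undefined)"

definition one_fam :: "'i \<Rightarrow> 'a" where
  "one_fam = (\<lambda>i. if i \<in> I then pone (P i) else undefined)"

definition single_fam :: "'i \<Rightarrow> 'a \<Rightarrow> 'i \<Rightarrow> 'a" where
  "single_fam j v = (\<lambda>i. if i = j then v else if i \<in> I then pone (P i) else undefined)"

lemma cp_famsI:
  assumes "\<And>i. i \<in> I \<Longrightarrow> x i \<in> pcar (P i)" "\<And>i. i \<in> I \<Longrightarrow> x i \<noteq> pzero (P i)"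
    and "\<And>i. i \<notin> I \<Longrightarrow> x i = undefined" "finite (fam_supp x)"
  shows "x \<in> cp_fams I P"
  using assms unfolding cp_fams_def fam_supp_def by auto

lemma cp_famsD:
  assumes "x \<in> cp_fams I P"
  shows cp_fams_closed: "i \<in> I \<Longrightarrow> x i \<in> pcar (P i)"
    and cp_fams_nonzero: "i \<in> I \<Longrightarrow> x i \<noteq> pzero (P i)"
    and cp_fams_undefined: "i \<notin> I \<Longrightarrow> x i = undefined"
    and finite_fam_supp: "finite (fam_supp x)"
  using assms unfolding cp_fams_def fam_supp_def by auto

lemma fam_supp_subset: "fam_supp x \<subseteq> I"
  by (auto simp: fam_supp_def)

lemma cp_rel_refl: "x \<in> cp_fams I P \<Longrightarrow> cp_rel I P x x"
  unfolding cp_rel_def by (auto intro!: exI[of _ "{}"])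

lemma cp_rel_sym:
  assumes "cp_rel I P x y"
  shows "cp_rel I P y x"
proof -
  obtain S where x: "x \<in> cp_fams I P" and y: "y \<in> cp_fams I P"
    and S: "S \<subseteq> I" "finite S" "even (card S)"
      "\<forall>i\<in>S. x i = pneg (P i) (y i)" "\<forall>i\<in>I - S. x i = y i"
    using assms unfolding cp_rel_def by blast
  have "\<forall>i\<in>S. y i = pneg (P i) (x i)"
    using S(1,4) by (auto simp: pasture_neg_neg[OF factor_pasture] cp_fams_closed[OF y])
  then show ?thesis
    unfolding cp_rel_def using x y S by (intro conjI exI[of _ S]) auto
qed

text \<open>Sign changes compose along the symmetric difference of the two even sets.\<close>
lemma cp_rel_trans:
  assumes "cp_rel I P x y" "cp_rel I P y z"
  shows "cp_rel I P x z"
proof -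
  obtain S where x: "x \<in> cp_fams I P" and S: "S \<subseteq> I" "finite S" "even (card S)"
      "\<forall>i\<in>S. x i = pneg (P i) (y i)" "\<forall>i\<in>I - S. x i = y i"
    using assms(1) unfolding cp_rel_def by blast
  obtain T where z: "z \<in> cp_fams I P" and T: "T \<subseteq> I" "finite T" "even (card T)"
      "\<forall>i\<in>T. y i = pneg (P i) (z i)" "\<forall>i\<in>I - T. y i = z i"
    using assms(2) unfolding cp_rel_def by blast
  let ?U = "(S - T) \<union> (T - S)"
  have "even (card ?U)"
    using S T by (simp add: even_card_sym_diff)
  moreover have "\<forall>i\<in>?U. x i = pneg (P i) (z i)"
    using S T by auto
  moreover have "x i = z i" if "i \<in> I - ?U" for i
  proof (cases "i \<in> S")
    case True
    then show ?thesis
      using that S(4) T(4) by (simp add: pasture_neg_neg[OF factor_pasture] cp_fams_closed[OF z])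
  next
    case False
    then show ?thesis
      using that S(5) T(5) by simp
  qed
  ultimately show ?thesis
    unfolding cp_rel_def using x z S T by (intro conjI exI[of _ ?U]) auto
qed

lemma cp_rel_in_cp_fams: "cp_rel I P x y \<Longrightarrow> x \<in> cp_fams I P \<and> y \<in> cp_fams I P"
  by (simp add: cp_rel_def)

lemma cp_class_eq: "cp_rel I P x y \<Longrightarrow> cp_class I P x = cp_class I P y"
  unfolding cp_class_def by (blast intro: cp_rel_sym cp_rel_trans)

lemma cp_class_self: "x \<in> cp_fams I P \<Longrightarrow> x \<in> cp_class I P x"
  by (simp add: cp_class_def cp_rel_refl)

lemma cp_rel_some_cp_class: "x \<in> cp_fams I P \<Longrightarrow> cp_rel I P x (SOME y. y \<in> cp_class I P x)"
  using someI[of "\<lambda>y. y \<in> cp_class I P x", OF cp_class_self] by (simp add: cp_class_def)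

lemma cp_class_in_cp_car: "x \<in> cp_fams I P \<Longrightarrow> cp_class I P x \<in> cp_car I P"
  by (simp add: cp_car_def)

lemma cp_car_cases:
  assumes "X \<in> cp_car I P"
  obtains "X = {}" | x where "x \<in> cp_fams I P" "X = cp_class I P x"
  using assms unfolding cp_car_def by auto

lemma fam_mult_in_cp_fams:
  assumes x: "x \<in> cp_fams I P" and y: "y \<in> cp_fams I P"
  shows "fam_mult x y \<in> cp_fams I P"
proof (rule cp_famsI)
  have "fam_supp (fam_mult x y) \<subseteq> fam_supp x \<union> fam_supp y"
    by (auto simp: fam_supp_def fam_mult_def pasture_one_mult[OF factor_pasture]
        pasture_one_closed[OF factor_pasture])
  then show "finite (fam_supp (fam_mult x y))"
    using finite_fam_supp[OF x] finite_fam_supp[OF y] finite_subset by blast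
qed (auto simp: fam_mult_def cp_fams_closed[OF x] cp_fams_closed[OF y] cp_fams_nonzero[OF x]
    cp_fams_nonzero[OF y] pasture_mult_closed[OF factor_pasture]
    pasture_mult_nonzero[OF factor_pasture])

text \<open>The sign changes combine along the symmetric difference, since \<open>(-a)(-b) = ab\<close>.\<close>
lemma cp_rel_fam_mult:
  assumes "cp_rel I P x x'" "cp_rel I P y y'"
  shows "cp_rel I P (fam_mult x y) (fam_mult x' y')"
proof -
  obtain S where x: "x \<in> cp_fams I P" and x': "x' \<in> cp_fams I P"
    and S: "S \<subseteq> I" "finite S" "even (card S)"
      "\<forall>i\<in>S. x i = pneg (P i) (x' i)" "\<forall>i\<in>I - S. x i = x' i"
    using assms(1) unfolding cp_rel_def by blast
  obtain T where y: "y \<in> cp_fams I P" and y': "y' \<in> cp_fams I P"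
    and T: "T \<subseteq> I" "finite T" "even (card T)"
      "\<forall>i\<in>T. y i = pneg (P i) (y' i)" "\<forall>i\<in>I - T. y i = y' i"
    using assms(2) unfolding cp_rel_def by blast
  let ?U = "(S - T) \<union> (T - S)"
  have R: "\<And>i. i \<in> I \<Longrightarrow> is_pasture (P i)" and closed: "\<And>i. i \<in> I \<Longrightarrow> x' i \<in> pcar (P i)"
      "\<And>i. i \<in> I \<Longrightarrow> y' i \<in> pcar (P i)"
    by (simp_all add: factor_pasture cp_fams_closed[OF x'] cp_fams_closed[OF y'])
  have "even (card ?U)"
    using S T by (simp add: even_card_sym_diff)
  moreover have "fam_mult x y i = pneg (P i) (fam_mult x' y' i)" if "i \<in> ?U" for i
  proof -
    have "i \<in> I"
      using that S(1) T(1) by blast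
    with that S(4,5) T(4,5) show ?thesis
      by (cases "i \<in> S") (simp_all add: fam_mult_def pasture_neg_mult_left[OF R closed]
          pasture_neg_mult_right[OF R closed])
  qed
  moreover have "fam_mult x y i = fam_mult x' y' i" if "i \<in> I - ?U" for i
    using that S(4,5) T(4,5)
    by (cases "i \<in> S") (simp_all add: fam_mult_def pasture_neg_mult_neg[OF R closed])
  ultimately show ?thesis
    unfolding cp_rel_def using S T fam_mult_in_cp_fams[OF x y] fam_mult_in_cp_fams[OF x' y']
    by (intro conjI exI[of _ ?U]) auto
qed

lemma cp_mul_cp_class:
  assumes "x \<in> cp_fams I P" "y \<in> cp_fams I P"
  shows "cp_mul I P (cp_class I P x) (cp_class I P y) = cp_class I P (fam_mult x y)"
proof -
  let ?x' = "SOME x'. x' \<in> cp_class I P x" and ?y' = "SOME y'. y' \<in> cp_class I P y"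
  have "cp_class I P x \<noteq> {}" "cp_class I P y \<noteq> {}"
    using assms cp_class_self by blast+
  then have "cp_mul I P (cp_class I P x) (cp_class I P y) = cp_class I P (fam_mult ?x' ?y')"
    by (simp add: cp_mul_def fam_mult_def Let_def)
  also have "\<dots> = cp_class I P (fam_mult x y)"
    using assms by (intro cp_class_eq[symmetric] cp_rel_fam_mult cp_rel_some_cp_class)
  finally show ?thesis .
qed

lemma one_fam_in_cp_fams: "one_fam \<in> cp_fams I P"
  by (rule cp_famsI) (auto simp: one_fam_def fam_supp_def pasture_one_closed[OF factor_pasture]
      pasture_zero_neq_one[OF factor_pasture, symmetric])

lemma fam_supp_one_fam [simp]: "fam_supp one_fam = {}"
  by (simp add: fam_supp_def one_fam_def)

lemma cp_one_eq_cp_class: "cp_one I P = cp_class I P one_fam"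
  by (simp add: cp_one_def one_fam_def)

lemma eq_one_fam_if_fam_supp_empty:
  assumes "x \<in> cp_fams I P" "fam_supp x = {}"
  shows "x = one_fam"
proof
  fix i show "x i = one_fam i"
    using assms cp_fams_undefined[OF assms(1)]
    by (cases "i \<in> I") (auto simp: fam_supp_def one_fam_def)
qed

lemma single_fam_same [simp]: "single_fam j v j = v"
  by (simp add: single_fam_def)

lemma fam_supp_single_fam: "fam_supp (single_fam j v) \<subseteq> {j}"
  by (auto simp: fam_supp_def single_fam_def)

lemma single_fam_in_cp_fams:
  assumes "j \<in> I" "v \<in> pcar (P j)" "v \<noteq> pzero (P j)"
  shows "single_fam j v \<in> cp_fams I P"
proof (rule cp_famsI)
  show "finite (fam_supp (single_fam j v))"
    using fam_supp_single_fam finite_subset by blast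
qed (use assms in \<open>auto simp: single_fam_def pasture_one_closed[OF factor_pasture]
    pasture_zero_neq_one[OF factor_pasture, symmetric]\<close>)

lemma cp_inj_eq_cp_class: "v \<noteq> pzero (P j) \<Longrightarrow> cp_inj I P j v = cp_class I P (single_fam j v)"
  by (simp add: cp_inj_def single_fam_def)

lemma fun_upd_neg_in_cp_fams:
  assumes "x \<in> cp_fams I P" "j \<in> I"
  shows "x(j := pneg (P j) (x j)) \<in> cp_fams I P"
proof (rule cp_famsI)
  have "fam_supp (x(j := pneg (P j) (x j))) \<subseteq> insert j (fam_supp x)"
    by (auto simp: fam_supp_def)
  then show "finite (fam_supp (x(j := pneg (P j) (x j))))"
    using finite_fam_supp[OF assms(1)] finite_subset by blast
qed (use assms in \<open>auto simp: cp_famsD pasture_neg_closed[OF factor_pasture]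
    pasture_neg_nonzero[OF factor_pasture]\<close>)

lemma fun_upd_one_in_cp_fams:
  assumes "x \<in> cp_fams I P" "j \<in> I"
  shows "x(j := pone (P j)) \<in> cp_fams I P" "fam_supp (x(j := pone (P j))) = fam_supp x - {j}"
proof -
  show supp: "fam_supp (x(j := pone (P j))) = fam_supp x - {j}"
    by (auto simp: fam_supp_def)
  show "x(j := pone (P j)) \<in> cp_fams I P"
    by (rule cp_famsI) (use assms supp in \<open>auto simp: cp_famsD pasture_one_closed[OF factor_pasture]
        pasture_zero_neq_one[OF factor_pasture, symmetric]\<close>)
qed

lemma cp_class_eq_cp_mul_cp_inj:
  assumes x: "x \<in> cp_fams I P" and j: "j \<in> I"
  shows "cp_class I P x = cp_mul I P (cp_class I P (x(j := pone (P j)))) (cp_inj I P j (x j))"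
proof -
  have "fam_mult (x(j := pone (P j))) (single_fam j (x j)) = x"
  proof
    fix i show "fam_mult (x(j := pone (P j))) (single_fam j (x j)) i = x i"
      using j by (auto simp: fam_mult_def single_fam_def cp_famsD[OF x]
          pasture_one_mult[OF factor_pasture]
          pasture_mult_one_right[OF factor_pasture])
  qed
  then show ?thesis
    using x j by (simp add: cp_inj_eq_cp_class cp_fams_nonzero cp_fams_closed cp_mul_cp_class
        fun_upd_one_in_cp_fams single_fam_in_cp_fams)
qed

text \<open>Induction on the support: every class is a finite product of injected elements.\<close>
lemma coprod_morphism_eqI:
  assumes h: "pasture_morphism (coprod I P) Q h" and h': "pasture_morphism (coprod I P) Q h'"
    and inj: "\<And>j v. \<lbrakk>j \<in> I; v \<in> pcar (P j)\<rbrakk> \<Longrightarrow> h (cp_inj I P j v) = h' (cp_inj I P j v)"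
    and X: "X \<in> cp_car I P"
  shows "h X = h' X"
proof -
  have classes: "\<forall>x\<in>cp_fams I P. fam_supp x = F \<longrightarrow> h (cp_class I P x) = h' (cp_class I P x)"
    if "finite F" for F
    using that
  proof (induction F rule: finite_induct)
    case empty
    show ?case
    proof (intro ballI impI)
      fix x assume "x \<in> cp_fams I P" "fam_supp x = {}"
      then have "x = one_fam"
        by (rule eq_one_fam_if_fam_supp_empty)
      then show "h (cp_class I P x) = h' (cp_class I P x)"
        using pasture_morphism_one[OF h] pasture_morphism_one[OF h']
        by (simp add: cp_one_eq_cp_class)
    qed
  next
    case (insert j F)
    show ?case
    proof (intro ballI impI)
      fix x assume x: "x \<in> cp_fams I P" and supp: "fam_supp x = insert j F"
      have j: "j \<in> I"
        using supp fam_supp_subset by blast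
      let ?x' = "x(j := pone (P j))"
      have x': "?x' \<in> cp_fams I P" "fam_supp ?x' = F"
        using fun_upd_one_in_cp_fams[OF x j] supp insert.hyps(2) by auto
      have factors: "cp_class I P ?x' \<in> cp_car I P" "cp_inj I P j (x j) \<in> cp_car I P"
        using x x' j by (simp_all add: cp_class_in_cp_car cp_inj_eq_cp_class cp_famsD
            single_fam_in_cp_fams)
      have "h (cp_class I P ?x') = h' (cp_class I P ?x')"
        using insert.IH x' by blast
      then show "h (cp_class I P x) = h' (cp_class I P x)"
        using cp_class_eq_cp_mul_cp_inj[OF x j] pasture_morphism_mult[OF h, simplified, OF factors]
          pasture_morphism_mult[OF h', simplified, OF factors] inj[OF j cp_fams_closed[OF x j]]
        by simp
    qed
  qed
  show ?thesis
    using X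
  proof (cases rule: cp_car_cases)
    case 1
    then show ?thesis
      using pasture_morphism_zero[OF h] pasture_morphism_zero[OF h'] by simp
  next
    case (2 x)
    then show ?thesis
      using classes[OF finite_fam_supp] by blast
  qed
qed

end

locale coprod_lifting = coprod_factors I P
  for I :: "'i set" and P :: "'i \<Rightarrow> 'a pasture" +
  fixes Q :: "'b pasture" and f :: "'i \<Rightarrow> 'a \<Rightarrow> 'b"
  assumes index_nonempty: "I \<noteq> {}"
    and target_pasture: "is_pasture Q"
    and factor_morphism: "i \<in> I \<Longrightarrow> pasture_morphism (P i) Q (f i)"
begin

sublocale QM: comm_monoid "mult_monoid Q"
  by (rule comm_monoid_mult_monoid[OF target_pasture])

definition fam_lift :: "('i \<Rightarrow> 'a) \<Rightarrow> 'b" where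
  "fam_lift x = finprod (mult_monoid Q) (\<lambda>i. f i (x i)) (fam_supp x)"

text \<open>The representative chosen by \<open>SOME\<close> is irrelevant by \<open>fam_lift_cp_rel\<close> below.\<close>
definition coprod_lift :: "('i \<Rightarrow> 'a) set \<Rightarrow> 'b" where
  "coprod_lift X = (if X = {} then pzero Q else fam_lift (SOME x. x \<in> X))"

lemma factor_values_in_carrier:
  "\<lbrakk>x \<in> cp_fams I P; T \<subseteq> I\<rbrakk> \<Longrightarrow> (\<lambda>i. f i (x i)) \<in> T \<rightarrow> carrier (mult_monoid Q)"
  using cp_fams_closed pasture_morphism_closed[OF factor_morphism] by auto

lemma finprod_factor_values_closed:
  assumes "x \<in> cp_fams I P" "T \<subseteq> I"
  shows "finprod (mult_monoid Q) (\<lambda>i. f i (x i)) T \<in> pcar Q"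
proof -
  have "finprod (mult_monoid Q) (\<lambda>i. f i (x i)) T \<in> carrier (mult_monoid Q)"
    using assms by (intro QM.finprod_closed factor_values_in_carrier)
  then show ?thesis
    by simp
qed

lemma fam_lift_closed: "x \<in> cp_fams I P \<Longrightarrow> fam_lift x \<in> pcar Q"
  unfolding fam_lift_def by (rule finprod_factor_values_closed[OF _ fam_supp_subset])

lemma fam_lift_eq_finprod:
  assumes x: "x \<in> cp_fams I P" and T: "finite T" "fam_supp x \<subseteq> T" "T \<subseteq> I"
  shows "fam_lift x = finprod (mult_monoid Q) (\<lambda>i. f i (x i)) T"
  unfolding fam_lift_def
proof (rule QM.finprod_mono_neutral_cong_left)
  show "f i (x i) = \<one>\<^bsub>mult_monoid Q\<^esub>" if "i \<in> T - fam_supp x" for i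
    using that T by (auto simp: fam_supp_def pasture_morphism_one[OF factor_morphism])
qed (use T factor_values_in_carrier[OF x] in auto)

lemma fam_lift_factor_out:
  assumes x: "x \<in> cp_fams I P" and j: "j \<in> I"
  shows "fam_lift x =
    pmul Q (f j (x j)) (finprod (mult_monoid Q) (\<lambda>i. f i (x i)) (fam_supp x - {j}))"
proof -
  let ?T = "insert j (fam_supp x - {j})"
  have "fam_lift x = finprod (mult_monoid Q) (\<lambda>i. f i (x i)) ?T"
    using x j finite_fam_supp[OF x] fam_supp_subset by (intro fam_lift_eq_finprod) auto
  also have "\<dots> = pmul Q (f j (x j)) (finprod (mult_monoid Q) (\<lambda>i. f i (x i)) (fam_supp x - {j}))"
    using x j finite_fam_supp[OF x] factor_values_in_carrier[OF x, of ?T] fam_supp_subset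
    by (subst QM.finprod_insert[of "fam_supp x - {j}" j "\<lambda>i. f i (x i)"]) auto
  finally show ?thesis .
qed

lemma finprod_off_index_cong:
  assumes x: "x \<in> cp_fams I P" and y: "y \<in> cp_fams I P" and eq: "\<forall>i\<in>I - {j}. x i = y i"
  shows "finprod (mult_monoid Q) (\<lambda>i. f i (x i)) (fam_supp x - {j})
       = finprod (mult_monoid Q) (\<lambda>i. f i (y i)) (fam_supp y - {j})"
proof (rule QM.finprod_cong')
  show "fam_supp x - {j} = fam_supp y - {j}"
    using eq by (auto simp: fam_supp_def)
  show "(\<lambda>i. f i (y i)) \<in> fam_supp y - {j} \<rightarrow> carrier (mult_monoid Q)"
    using fam_supp_subset by (intro factor_values_in_carrier[OF y]) blast
  show "f i (x i) = f i (y i)" if "i \<in> fam_supp y - {j}" for i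
  proof -
    have "i \<in> I - {j}"
      using that fam_supp_subset by blast
    then show ?thesis
      using eq by simp
  qed
qed

text \<open>Flipping signs on an even set multiplies the product by \<open>(-1)\<^bsup>2k\<^esup> = 1\<close>.\<close>
lemma fam_lift_cp_rel:
  assumes "cp_rel I P x y"
  shows "fam_lift x = fam_lift y"
proof -
  obtain S where x: "x \<in> cp_fams I P" and y: "y \<in> cp_fams I P"
    and S: "S \<subseteq> I" "finite S" "even (card S)"
      "\<forall>i\<in>S. x i = pneg (P i) (y i)" "\<forall>i\<in>I - S. x i = y i"
    using assms unfolding cp_rel_def by blast
  define m where "m = pneg Q (pone Q)"
  define sign where "sign i = (if i \<in> S then m else pone Q)" for i
  define T where "T = fam_supp x \<union> fam_supp y \<union> S"
  have m: "m \<in> pcar Q"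
    by (simp add: m_def pasture_neg_closed pasture_one_closed target_pasture)
  have T: "finite T" "T \<subseteq> I"
    using finite_fam_supp[OF x] finite_fam_supp[OF y] S fam_supp_subset by (auto simp: T_def)
  have fy: "(\<lambda>i. f i (y i)) \<in> T \<rightarrow> carrier (mult_monoid Q)"
    by (rule factor_values_in_carrier[OF y T(2)])
  have sign: "sign \<in> T \<rightarrow> carrier (mult_monoid Q)"
    using m by (simp add: sign_def pasture_one_closed target_pasture)
  have "fam_lift x = finprod (mult_monoid Q) (\<lambda>i. f i (x i)) T"
    using x T by (intro fam_lift_eq_finprod) (auto simp: T_def)
  also have "\<dots> = finprod (mult_monoid Q) (\<lambda>i. pmul Q (sign i) (f i (y i))) T"
  proof (rule QM.finprod_cong')
    fix i assume "i \<in> T"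
    then have i: "i \<in> I"
      using T(2) by blast
    have fyi: "f i (y i) \<in> pcar Q"
      using i by (simp add: cp_fams_closed[OF y] pasture_morphism_closed[OF factor_morphism])
    show "f i (x i) = pmul Q (sign i) (f i (y i))"
    proof (cases "i \<in> S")
      case True
      then show ?thesis
        using i S(4) by (simp add: sign_def m_def cp_fams_closed[OF y]
            pasture_morphism_neg[OF factor_morphism] pasture_neg_eq_mult[OF target_pasture fyi])
    next
      case False
      then show ?thesis
        using i S(5) fyi by (simp add: sign_def pasture_one_mult[OF target_pasture])
    qed
  qed (use fy sign pasture_mult_closed[OF target_pasture] in fastforce)+
  also have "\<dots> = pmul Q (finprod (mult_monoid Q) sign T)
      (finprod (mult_monoid Q) (\<lambda>i. f i (y i)) T)"
    using QM.finprod_multf[OF sign fy] by simp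
  also have "finprod (mult_monoid Q) sign T = finprod (mult_monoid Q) (\<lambda>_. m) S"
    using T sign by (intro QM.finprod_mono_neutral_cong_right) (auto simp: T_def sign_def)
  also have "\<dots> = pone Q"
    unfolding m_def using target_pasture S(3) by (rule finprod_neg_one_even_card)
  also have "finprod (mult_monoid Q) (\<lambda>i. f i (y i)) T = fam_lift y"
    using y T by (intro fam_lift_eq_finprod[symmetric]) (auto simp: T_def)
  finally show ?thesis
    using fam_lift_closed[OF y] by (simp add: pasture_one_mult[OF target_pasture])
qed

lemma fam_lift_fam_mult:
  assumes x: "x \<in> cp_fams I P" and y: "y \<in> cp_fams I P"
  shows "fam_lift (fam_mult x y) = pmul Q (fam_lift x) (fam_lift y)"
proof -
  define T where "T = fam_supp x \<union> fam_supp y"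
  have T: "finite T" "T \<subseteq> I"
    using finite_fam_supp[OF x] finite_fam_supp[OF y] fam_supp_subset by (auto simp: T_def)
  have fx: "(\<lambda>i. f i (x i)) \<in> T \<rightarrow> carrier (mult_monoid Q)"
    and fy: "(\<lambda>i. f i (y i)) \<in> T \<rightarrow> carrier (mult_monoid Q)"
    using factor_values_in_carrier x y T(2) by simp_all
  have "fam_supp (fam_mult x y) \<subseteq> T"
    by (auto simp: T_def fam_supp_def fam_mult_def pasture_one_mult[OF factor_pasture]
        pasture_one_closed[OF factor_pasture])
  then have "fam_lift (fam_mult x y) = finprod (mult_monoid Q) (\<lambda>i. f i (fam_mult x y i)) T"
    using T by (intro fam_lift_eq_finprod fam_mult_in_cp_fams x y)
  also have "\<dots> = finprod (mult_monoid Q) (\<lambda>i. pmul Q (f i (x i)) (f i (y i))) T"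
    using T fx fy
    by (intro QM.finprod_cong') (auto simp: fam_mult_def cp_fams_closed[OF x] cp_fams_closed[OF y]
        pasture_morphism_mult[OF factor_morphism] intro: pasture_mult_closed[OF target_pasture])
  also have "\<dots> = pmul Q (fam_lift x) (fam_lift y)"
    using QM.finprod_multf[OF fx fy] fam_lift_eq_finprod[OF x T(1) _ T(2)]
      fam_lift_eq_finprod[OF y T(1) _ T(2)] by (simp add: T_def)
  finally show ?thesis .
qed

lemma fam_lift_fun_upd_neg:
  assumes x: "x \<in> cp_fams I P" and j: "j \<in> I"
  shows "fam_lift (x(j := pneg (P j) (x j))) = pneg Q (fam_lift x)"
proof -
  let ?y = "x(j := pneg (P j) (x j))"
  let ?C = "finprod (mult_monoid Q) (\<lambda>i. f i (x i)) (fam_supp x - {j})"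
  have y: "?y \<in> cp_fams I P"
    by (rule fun_upd_neg_in_cp_fams[OF x j])
  have C: "?C \<in> pcar Q"
    using fam_supp_subset by (intro finprod_factor_values_closed[OF x]) blast
  have fxj: "f j (x j) \<in> pcar Q"
    using x j by (simp add: cp_fams_closed pasture_morphism_closed[OF factor_morphism])
  have "fam_lift ?y = pmul Q (pneg Q (f j (x j))) ?C"
    using fam_lift_factor_out[OF y j] finprod_off_index_cong[OF y x]
    by (simp add: j cp_fams_closed[OF x] pasture_morphism_neg[OF factor_morphism])
  also have "\<dots> = pneg Q (fam_lift x)"
    using fam_lift_factor_out[OF x j] by (simp add: pasture_neg_mult_left[OF target_pasture fxj C])
  finally show ?thesis .
qed

lemma fam_lift_one_fam: "fam_lift one_fam = pone Q"
  by (simp add: fam_lift_def)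

lemma fam_lift_single_fam:
  assumes "j \<in> I" "v \<in> pcar (P j)" "v \<noteq> pzero (P j)"
  shows "fam_lift (single_fam j v) = f j v"
proof -
  have supp: "fam_supp (single_fam j v) - {j} = {}"
    using fam_supp_single_fam by blast
  show ?thesis
    using assms fam_lift_factor_out[OF single_fam_in_cp_fams[OF assms] assms(1)]
    by (simp add: supp pasture_mult_one_right[OF target_pasture]
        pasture_morphism_closed[OF factor_morphism])
qed

text \<open>The product over the indices other than \<open>j\<close> is common to the three families and
  scales the image under \<open>f j\<close> of the null relation at \<open>j\<close>.\<close>
lemma fam_lift_null:
  assumes x: "x \<in> cp_fams I P" and y: "y \<in> cp_fams I P" and z: "z \<in> cp_fams I P"
    and j: "j \<in> I" and null: "(x j, y j, z j) \<in> pnull (P j)"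
    and eq: "\<forall>i\<in>I - {j}. x i = y i \<and> y i = z i"
  shows "(fam_lift x, fam_lift y, fam_lift z) \<in> pnull Q"
proof -
  let ?C = "finprod (mult_monoid Q) (\<lambda>i. f i (x i)) (fam_supp x - {j})"
  have C: "?C \<in> pcar Q"
    using fam_supp_subset by (intro finprod_factor_values_closed[OF x]) blast
  have lift_eq: "fam_lift w = pmul Q ?C (f j (w j))"
    if w: "w \<in> cp_fams I P" "\<forall>i\<in>I - {j}. x i = w i" for w
  proof -
    have fw: "f j (w j) \<in> pcar Q"
      using w j by (simp add: cp_fams_closed pasture_morphism_closed[OF factor_morphism])
    have "fam_lift w = pmul Q (f j (w j)) ?C"
      using fam_lift_factor_out[OF w(1) j] finprod_off_index_cong[OF x w] by simp
    also have "\<dots> = pmul Q ?C (f j (w j))"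
      by (rule pasture_mult_comm[OF target_pasture fw C])
    finally show ?thesis .
  qed
  have "(pmul Q ?C (f j (x j)), pmul Q ?C (f j (y j)), pmul Q ?C (f j (z j))) \<in> pnull Q"
    using pasture_morphism_null[OF factor_morphism[OF j] null] C
    by (rule pasture_null_scale[OF target_pasture])
  then show ?thesis
    using lift_eq[OF x] lift_eq[OF y] lift_eq[OF z] eq by simp
qed

lemma coprod_lift_cp_class:
  assumes "x \<in> cp_fams I P"
  shows "coprod_lift (cp_class I P x) = fam_lift x"
proof -
  have "cp_class I P x \<noteq> {}"
    using cp_class_self[OF assms] by blast
  then show ?thesis
    using fam_lift_cp_rel[OF cp_rel_some_cp_class[OF assms]] by (simp add: coprod_lift_def)
qed

lemma coprod_lift_member:
  assumes "X \<in> cp_car I P" "x \<in> X"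
  shows "x \<in> cp_fams I P" "coprod_lift X = fam_lift x"
proof -
  obtain x0 where "x0 \<in> cp_fams I P" "X = cp_class I P x0"
    using assms by (auto elim: cp_car_cases)
  then have "cp_rel I P x0 x"
    using assms(2) by (simp add: cp_class_def)
  then show "x \<in> cp_fams I P" "coprod_lift X = fam_lift x"
    using \<open>X = cp_class I P x0\<close> by (simp_all add: cp_rel_in_cp_fams cp_class_eq
        coprod_lift_cp_class)
qed

lemma coprod_lift_empty [simp]: "coprod_lift {} = pzero Q"
  by (simp add: coprod_lift_def)

lemma coprod_lift_closed: "X \<in> cp_car I P \<Longrightarrow> coprod_lift X \<in> pcar Q"
  by (erule cp_car_cases)
    (simp_all add: coprod_lift_cp_class fam_lift_closed pasture_zero_closed[OF target_pasture])

lemma coprod_lift_mult: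
  assumes "X \<in> cp_car I P" "Y \<in> cp_car I P"
  shows "coprod_lift (cp_mul I P X Y) = pmul Q (coprod_lift X) (coprod_lift Y)"
proof (cases "X = {} \<or> Y = {}")
  case True
  then show ?thesis
    using coprod_lift_closed[OF assms(1)] coprod_lift_closed[OF assms(2)]
    by (auto simp: cp_mul_def pasture_zero_mult[OF target_pasture]
        pasture_mult_zero_right[OF target_pasture])
next
  case False
  then obtain x y
    where "x \<in> cp_fams I P" "X = cp_class I P x" "y \<in> cp_fams I P" "Y = cp_class I P y"
    using assms by (metis cp_car_cases)
  then show ?thesis
    by (simp add: cp_mul_cp_class coprod_lift_cp_class fam_mult_in_cp_fams fam_lift_fam_mult)
qed

lemma coprod_lift_neg:
  assumes X: "X \<in> cp_car I P"
  shows "coprod_lift (cp_neg I P X) = pneg Q (coprod_lift X)"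
proof (cases "X = {}")
  case True
  then show ?thesis
    by (simp add: cp_neg_def pasture_neg_zero[OF target_pasture])
next
  case False
  define x where "x = (SOME x. x \<in> X)"
  define j where "j = (SOME j. j \<in> I)"
  have x: "x \<in> X"
    using False by (simp add: x_def some_in_eq)
  have j: "j \<in> I"
    using index_nonempty by (simp add: j_def some_in_eq)
  have "cp_neg I P X = cp_class I P (x(j := pneg (P j) (x j)))"
    using False by (simp add: cp_neg_def Let_def x_def j_def)
  then show ?thesis
    using coprod_lift_member[OF X x] j by (simp add: coprod_lift_cp_class fun_upd_neg_in_cp_fams
        fam_lift_fun_upd_neg)
qed

lemma coprod_lift_one: "coprod_lift (cp_one I P) = pone Q"
  by (simp add: cp_one_eq_cp_class coprod_lift_cp_class one_fam_in_cp_fams fam_lift_one_fam)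

lemma coprod_lift_cp_inj:
  assumes "j \<in> I" "v \<in> pcar (P j)"
  shows "coprod_lift (cp_inj I P j v) = f j v"
proof (cases "v = pzero (P j)")
  case True
  then show ?thesis
    by (simp add: cp_inj_def pasture_morphism_zero[OF factor_morphism[OF assms(1)]])
next
  case False
  then show ?thesis
    using assms by (simp add: cp_inj_eq_cp_class coprod_lift_cp_class single_fam_in_cp_fams
        fam_lift_single_fam)
qed

lemma coprod_lift_null:
  assumes "(X, Y, Z) \<in> cp_null I P"
  shows "(coprod_lift X, coprod_lift Y, coprod_lift Z) \<in> pnull Q"
proof -
  have X: "X \<in> cp_car I P" and Y: "Y \<in> cp_car I P" and Z: "Z \<in> cp_car I P"
    using assms by (simp_all add: cp_null_def)
  have closed: "coprod_lift X \<in> pcar Q" "coprod_lift Y \<in> pcar Q" "coprod_lift Z \<in> pcar Q"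
    using X Y Z by (simp_all add: coprod_lift_closed)
  from assms consider
      (single_index) x y z j where "x \<in> X" "y \<in> Y" "z \<in> Z" "j \<in> I"
        "(x j, y j, z j) \<in> pnull (P j)" "\<forall>i\<in>I - {j}. x i = y i \<and> y i = z i"
    | (Z_zero) "Z = {}" "X = cp_neg I P Y"
    | (Y_zero) "Y = {}" "X = cp_neg I P Z"
    | (X_zero) "X = {}" "Y = cp_neg I P Z"
    unfolding cp_null_def mem_Collect_eq case_prod_conv by (elim conjE disjE bexE) blast+
  then show ?thesis
  proof cases
    case (single_index x y z j)
    then show ?thesis
      using fam_lift_null[of x y z j] coprod_lift_member[OF X \<open>x \<in> X\<close>]
        coprod_lift_member[OF Y \<open>y \<in> Y\<close>] coprod_lift_member[OF Z \<open>z \<in> Z\<close>]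
      by simp
  next
    case Z_zero
    then show ?thesis
      using closed by (simp add: pasture_null_zero_iff[OF target_pasture] coprod_lift_neg[OF Y])
  next
    case Y_zero
    then have "(coprod_lift X, coprod_lift Z, coprod_lift Y) \<in> pnull Q"
      using closed by (simp add: pasture_null_zero_iff[OF target_pasture] coprod_lift_neg[OF Z])
    then show ?thesis
      using pasture_null_perm[OF target_pasture] by blast
  next
    case X_zero
    then have "(coprod_lift Y, coprod_lift Z, coprod_lift X) \<in> pnull Q"
      using closed by (simp add: pasture_null_zero_iff[OF target_pasture] coprod_lift_neg[OF Z])
    then show ?thesis
      using pasture_null_perm[OF target_pasture] by blast
  qed
qed

lemma coprod_lift_morphism: "pasture_morphism (coprod I P) Q coprod_lift"
  unfolding pasture_morphism_def
  by (simp add: coprod_lift_closed coprod_lift_one coprod_lift_mult coprod_lift_neg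
      coprod_lift_null)

end

theorem lemma7p4:
  fixes I :: "'i set" and P :: "'i \<Rightarrow> 'a pasture" and Q :: "'b pasture"
    and f :: "'i \<Rightarrow> 'a \<Rightarrow> 'b"
  assumes "I \<noteq> {}"
    and "\<forall>i\<in>I. is_pasture (P i)"
    and "is_pasture Q"
    and "\<forall>i\<in>I. pasture_morphism (P i) Q (f i)"
  shows "\<exists>g. pasture_morphism (coprod I P) Q g \<and>
             (\<forall>j\<in>I. \<forall>x\<in>pcar (P j). f j x = g (cp_inj I P j x)) \<and>
             (\<forall>h. pasture_morphism (coprod I P) Q h \<and>
                  (\<forall>j\<in>I. \<forall>x\<in>pcar (P j). f j x = h (cp_inj I P j x))
                \<longrightarrow> (\<forall>X\<in>pcar (coprod I P). h X = g X))"
proof -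
  interpret coprod_lifting I P Q f
    using assms by unfold_locales auto
  show ?thesis
  proof (intro exI[of _ coprod_lift] conjI allI impI ballI)
    show "pasture_morphism (coprod I P) Q coprod_lift"
      by (rule coprod_lift_morphism)
    show "f j x = coprod_lift (cp_inj I P j x)" if "j \<in> I" "x \<in> pcar (P j)" for j x
      using that by (simp add: coprod_lift_cp_inj)
    show "h X = coprod_lift X"
      if h: "pasture_morphism (coprod I P) Q h \<and> (\<forall>j\<in>I. \<forall>x\<in>pcar (P j). f j x = h (cp_inj I P j x))"
        and X: "X \<in> pcar (coprod I P)" for h X
    proof (rule coprod_morphism_eqI)
      show "pasture_morphism (coprod I P) Q h"
        using h by blast
      show "h (cp_inj I P j v) = coprod_lift (cp_inj I P j v)" if "j \<in> I" "v \<in> pcar (P j)" for j v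
        using h that by (simp add: coprod_lift_cp_inj)
    qed (use X coprod_lift_morphism in simp_all)
  qed
qed

end
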